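(* For all integers $m,r,n\ge 0$ and all real $x\neq 0$, $$H_{m+r,n}(x)=m!\sum_{k=0}^{m}\frac{(-1)^k}{k!}\,\frac{H_{m-k,n}(x)}{(m-k)!}\,\frac{d^k}{dx^k}\!\left(x^{-n}H_{r,n}(x)\right).$$
   Context: For integers $m,n\ge 0$, the two-index Hermite polynomial is $H_{m,n}(x)=\left(-\frac{d}{dx}+2x\right)^m(x^n)$, i.e. the operator $f\mapsto -f'+2xf$ applied $m$ times to $x^n$. *)

theory Defs
  imports "HOL-Analysis.Analysis" "HOL-Computational_Algebra.Polynomial"
begin

definition herm_op :: "real poly \<Rightarrow> real poly" where
  "herm_op p = - pderiv p + [:0, 2:] * p"

definition H2 :: "nat \<Rightarrow> nat \<Rightarrow> real poly" where
  "H2 m n = (herm_op ^^ m) (monom 1 n)"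

end

theory Submission
  imports Defs
begin

(* Write D for the operator f \<mapsto> -f' + 2xf, so that H_{j,n} = D^j(x^n) and
   H_{m+r,n} = D^m H_{r,n}.  On x \<noteq> 0 we have H_{r,n} = x^n g with
   g = x^{-n} H_{r,n}.  The theorem is then an instance of a Leibniz-type rule:
   since D(f g) = (D f) g - f g', induction on m gives

     D^m(p g) = \<Sum>k\<le>m. (m choose k) (-1)^k (D^{m-k} p) g^{(k)}

   for a polynomial p and any g whose iterated derivatives exist on an open set. *)

text \<open>Quotient rule for q/y^N, written so that the result is again of the form
  polynomial divided by a power of y.\<close>
lemma laurent_has_real_derivative:
  fixes q :: "real poly" and y :: real
  assumes "y \<noteq> 0"
  shows "((\<lambda>y. poly q y / y ^ N) has_real_derivative
           poly (pderiv q * [:0, 1:] - smult (real N) q) y / y ^ Suc N) (at y)"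
proof -
  have "((\<lambda>y. poly q y / y ^ N) has_real_derivative
          (poly (pderiv q) y * y ^ N - poly q y * (real N * y ^ (N - 1))) / (y ^ N * y ^ N)) (at y)"
    using assms by (auto intro!: derivative_eq_intros)
  moreover have "(poly (pderiv q) y * y ^ N - poly q y * (real N * y ^ (N - 1))) / (y ^ N * y ^ N)
      = poly (pderiv q * [:0, 1:] - smult (real N) q) y / y ^ Suc N"
    using assms by (cases N) (simp_all add: field_simps)
  ultimately show ?thesis by simp
qed

lemma iterated_deriv_laurent:
  fixes Q :: "real poly"
  shows "\<exists>q N. \<forall>y. y \<noteq> 0 \<longrightarrow> (deriv ^^ k) (\<lambda>y. poly Q y / y ^ n) y = poly q y / y ^ N"
proof (induction k)
  case 0
  then show ?case by auto
next
  case (Suc k)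
  then obtain q N
    where closed: "\<And>y. y \<noteq> 0 \<Longrightarrow> (deriv ^^ k) (\<lambda>y. poly Q y / y ^ n) y = poly q y / y ^ N"
    by blast
  have "(deriv ^^ Suc k) (\<lambda>y. poly Q y / y ^ n) y
          = poly (pderiv q * [:0, 1:] - smult (real N) q) y / y ^ Suc N" if "y \<noteq> 0" for y
  proof -
    have "((deriv ^^ k) (\<lambda>y. poly Q y / y ^ n) has_real_derivative
            poly (pderiv q * [:0, 1:] - smult (real N) q) y / y ^ Suc N) (at y)"
      by (rule has_field_derivative_transform_within_open
            [OF laurent_has_real_derivative[OF that], of "-{0}"])
         (use that closed in auto)
    then show ?thesis by (simp add: DERIV_imp_deriv)
  qed
  then show ?case by blast
qed

lemma iterated_deriv_laurent_has_derivative: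
  fixes Q :: "real poly" and y :: real
  assumes "y \<noteq> 0"
  shows "((deriv ^^ k) (\<lambda>y. poly Q y / y ^ n) has_real_derivative
           deriv ((deriv ^^ k) (\<lambda>y. poly Q y / y ^ n)) y) (at y)"
proof -
  obtain q N
    where closed: "\<And>y. y \<noteq> 0 \<Longrightarrow> (deriv ^^ k) (\<lambda>y. poly Q y / y ^ n) y = poly q y / y ^ N"
    using iterated_deriv_laurent by blast
  have "((deriv ^^ k) (\<lambda>y. poly Q y / y ^ n) has_real_derivative
          poly (pderiv q * [:0, 1:] - smult (real N) q) y / y ^ Suc N) (at y)"
    by (rule has_field_derivative_transform_within_open
          [OF laurent_has_real_derivative[OF assms], of "-{0}"])
       (use assms closed in auto)
  then show ?thesis
    by (simp add: DERIV_imp_deriv)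
qed

lemma poly_herm_op: "poly (herm_op p) y = - poly (pderiv p) y + 2 * y * poly p y"
  by (simp add: herm_op_def)

text \<open>Pascal's rule, used to merge the two sums arising in the induction step.\<close>
lemma sum_choose_Suc:
  fixes c :: "nat \<Rightarrow> 'a :: comm_ring_1"
  shows "(\<Sum>k\<le>Suc m. of_nat (Suc m choose k) * c k) =
         (\<Sum>k\<le>m. of_nat (m choose k) * c k) + (\<Sum>k\<le>m. of_nat (m choose k) * c (Suc k))"
proof -
  have "(\<Sum>k\<le>Suc m. of_nat (Suc m choose k) * c k) =
        c 0 + (\<Sum>k\<le>m. of_nat (Suc m choose Suc k) * c (Suc k))"
    by (subst sum.atMost_Suc_shift) simp
  also have "\<dots> = c 0 + (\<Sum>k\<le>m. of_nat (m choose Suc k) * c (Suc k))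
                  + (\<Sum>k\<le>m. of_nat (m choose k) * c (Suc k))"
    by (simp add: sum.distrib algebra_simps)
  also have "c 0 + (\<Sum>k\<le>m. of_nat (m choose Suc k) * c (Suc k))
             = (\<Sum>k\<le>Suc m. of_nat (m choose k) * c k)"
    by (subst sum.atMost_Suc_shift) simp
  also have "\<dots> = (\<Sum>k\<le>m. of_nat (m choose k) * c k)"
    by (simp add: binomial_eq_0)
  finally show ?thesis .
qed

definition herm_leibniz :: "nat \<Rightarrow> real poly \<Rightarrow> (real \<Rightarrow> real) \<Rightarrow> real \<Rightarrow> real" where
  "herm_leibniz m p g y =
     (\<Sum>k\<le>m. real (m choose k) * (-1) ^ k * poly ((herm_op ^^ (m - k)) p) y * (deriv ^^ k) g y)"

lemma herm_leibniz_has_derivative: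
  assumes smooth: "\<And>k. ((deriv ^^ k) g has_real_derivative deriv ((deriv ^^ k) g) y) (at y)"
  shows "(herm_leibniz m p g has_real_derivative
           (\<Sum>k\<le>m. real (m choose k) * (-1) ^ k *
              (poly (pderiv ((herm_op ^^ (m - k)) p)) y * (deriv ^^ k) g y
               + poly ((herm_op ^^ (m - k)) p) y * (deriv ^^ Suc k) g y))) (at y)"
  unfolding herm_leibniz_def[abs_def]
  by (intro derivative_eq_intros DERIV_sum poly_DERIV) (auto simp: algebra_simps intro: smooth)

lemma herm_leibniz_Suc:
  "- (\<Sum>k\<le>m. real (m choose k) * (-1) ^ k *
        (poly (pderiv ((herm_op ^^ (m - k)) p)) y * (deriv ^^ k) g y
         + poly ((herm_op ^^ (m - k)) p) y * (deriv ^^ Suc k) g y))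
   + 2 * y * herm_leibniz m p g y = herm_leibniz (Suc m) p g y"
proof -
  define P where "P j = poly ((herm_op ^^ j) p) y" for j
  define G where "G k = (deriv ^^ k) g y" for k
  have P_Suc: "P (Suc m - k) = - poly (pderiv ((herm_op ^^ (m - k)) p)) y + 2 * y * P (m - k)"
    if "k \<le> m" for k
    using that by (simp add: P_def Suc_diff_le poly_herm_op)
  have "- (\<Sum>k\<le>m. real (m choose k) * (-1) ^ k *
            (poly (pderiv ((herm_op ^^ (m - k)) p)) y * G k + P (m - k) * G (Suc k)))
        + 2 * y * (\<Sum>k\<le>m. real (m choose k) * (-1) ^ k * P (m - k) * G k)
      = (\<Sum>k\<le>m. real (m choose k) * ((-1) ^ k * P (Suc m - k) * G k))
        + (\<Sum>k\<le>m. real (m choose k) * ((-1) ^ Suc k * P (Suc m - Suc k) * G (Suc k)))"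
    by (simp add: sum_distrib_left sum.distrib[symmetric] sum_negf[symmetric])
       (auto intro!: sum.cong simp: P_Suc algebra_simps)
  also have "\<dots> = (\<Sum>k\<le>Suc m. real (Suc m choose k) * ((-1) ^ k * P (Suc m - k) * G k))"
    by (rule sum_choose_Suc[symmetric])
  finally show ?thesis
    by (simp add: herm_leibniz_def P_def G_def mult.assoc)
qed

lemma herm_op_iterate_product:
  assumes "open S"
    and smooth: "\<And>k y. y \<in> S \<Longrightarrow> ((deriv ^^ k) g has_real_derivative deriv ((deriv ^^ k) g) y) (at y)"
    and product: "\<And>y. y \<in> S \<Longrightarrow> poly q y = poly p y * g y"
    and "y \<in> S"
  shows "poly ((herm_op ^^ m) q) y = herm_leibniz m p g y"
  using \<open>y \<in> S\<close>
proof (induction m arbitrary: y)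
  case 0
  then show ?case by (simp add: herm_leibniz_def product)
next
  case (Suc m)
  define D where "D = (\<Sum>k\<le>m. real (m choose k) * (-1) ^ k *
      (poly (pderiv ((herm_op ^^ (m - k)) p)) y * (deriv ^^ k) g y
       + poly ((herm_op ^^ (m - k)) p) y * (deriv ^^ Suc k) g y))"
  have "(herm_leibniz m p g has_real_derivative D) (at y)"
    unfolding D_def by (rule herm_leibniz_has_derivative[OF smooth[OF Suc.prems]])
  then have "(poly ((herm_op ^^ m) q) has_real_derivative D) (at y)"
    by (rule has_field_derivative_transform_within_open[OF _ \<open>open S\<close> Suc.prems])
       (use Suc.IH in auto)
  then have "poly (pderiv ((herm_op ^^ m) q)) y = D"
    using DERIV_unique poly_DERIV by blast
  then show ?case
    using herm_leibniz_Suc[of m p y g] Suc.IH[OF Suc.prems]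
    by (simp add: poly_herm_op D_def)
qed

theorem mainTheorem16:
  fixes m r n :: nat and x :: real
  assumes "x \<noteq> 0"
  shows "poly (H2 (m + r) n) x =
    fact m * (\<Sum>k\<le>m. ((-1) ^ k / fact k) * (poly (H2 (m - k) n) x / fact (m - k))
      * (deriv ^^ k) (\<lambda>y. y powi (- int n) * poly (H2 r n) y) x)"
proof -
  define g where "g = (\<lambda>y::real. y powi (- int n) * poly (H2 r n) y)"
  have g_laurent: "g = (\<lambda>y. poly (H2 r n) y / y ^ n)"
    by (auto simp: g_def power_int_minus divide_inverse mult.commute)
  have "poly (H2 (m + r) n) x = poly ((herm_op ^^ m) (H2 r n)) x"
    by (simp add: H2_def funpow_add)
  also have "\<dots> = herm_leibniz m (monom 1 n) g x"
    by (rule herm_op_iterate_product[of "-{0}"])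
       (use assms in \<open>auto simp: g_laurent poly_monom iterated_deriv_laurent_has_derivative\<close>)
  also have "\<dots> = fact m * (\<Sum>k\<le>m. ((-1) ^ k / fact k) * (poly (H2 (m - k) n) x / fact (m - k))
                   * (deriv ^^ k) g x)"
    unfolding herm_leibniz_def sum_distrib_left H2_def
    by (intro sum.cong refl) (auto simp: binomial_fact field_simps)
  finally show ?thesis by (simp add: g_def)
qed

end
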